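(* Let $\mathbb{K}$ be a field of characteristic $2$, let $(A,L,\theta_L)$ be a restricted Lie–Rinehart algebra, let $(A,M,\theta_M)$ be a strongly abelian restricted Lie–Rinehart algebra, and let $0\to(A,M,\theta_M)\xrightarrow{\iota}(A,E,\theta_E)\xrightarrow{\pi}(A,L,\theta_L)\to0$ be an abelian extension. Then $(M,\rho)$ is a restricted Lie–Rinehart module over $(A,L,\theta_L)$, where $\rho:L\to\mathrm{End}(M)$ is defined by $\rho(x)(m)=\iota^{-1}([\tilde x,\iota(m)]_E)$ for $x\in L$, $m\in M$, with $\tilde x\in E$ such that $\pi(\tilde x)=x$.
   Context: $\mathbb{K}$ has characteristic $2$. Restricted Lie algebra: Lie algebra with $x\mapsto x^{[2]}$, $(\lambda x)^{[2]}=\lambda^2x^{[2]}$, $\mathrm{ad}_{x^{[2]}}=\mathrm{ad}_x^2$, $(x+y)^{[2]}=x^{[2]}+y^{[2]}+[x,y]$. Restricted Lie–Rinehart algebra $(A,L,\theta)$: $A$ commutative associative, $L$ restricted Lie algebra and $A$-module, $\theta:L\to\mathrm{Der}(A)$ an $A$-linear restricted Lie morphism ($\mathrm{Der}(A)$ with commutator and $D^{[2]}=D^2$) with $[x,ay]=a[x,y]+\theta(x)(a)y$ and $(ax)^{[2]}=a^2x^{[2]}+\theta(ax)(a)x$. Morphisms: $A$-linear restricted Lie morphisms $f$ with $\theta_H\circ f=\theta_L$. Strongly abelian: $[m,n]=0$, $m^{[2]}=0$ for all $m,n$. An abelian extension is a short exact sequence of restricted Lie–Rinehart algebras over the same $A$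 as in the claim. A restricted Lie–Rinehart module over $(A,L,\theta_L)$: an $A$-module $M$ with a restricted Lie morphism $\rho:L\to\mathrm{End}(M)$ (i.e. $\rho([x,y])=[\rho(x),\rho(y)]$, $\rho(x^{[2]})=\rho(x)^2$) such that $\rho(x)(am)=a\rho(x)(m)+\theta_L(x)(a)m$. *)

theory Defs
  imports Main
begin

text \<open>The ground field K is a type 'k::field with (2::'k) = 0.
The commutative associative K-algebra A is a type 'a::comm_ring_1 together with a
ring homomorphism kappa : K -> A (the structure map); K-scalar multiplication on any
A-module is multiplication by kappa c. Each Lie-Rinehart algebra / module is a type
(its carrier is the whole type) with additive group structure from ab_group_add and
explicit A-action s, bracket b, 2-map p and anchor theta.\<close>

definition K_algebra :: "('k::field \<Rightarrow> 'a::comm_ring_1) \<Rightarrow> bool" where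
  "K_algebra \<kappa> \<longleftrightarrow> (\<forall>c d. \<kappa> (c + d) = \<kappa> c + \<kappa> d \<and> \<kappa> (c * d) = \<kappa> c * \<kappa> d) \<and> \<kappa> 1 = 1"

definition A_module :: "('a::comm_ring_1 \<Rightarrow> 'v::ab_group_add \<Rightarrow> 'v) \<Rightarrow> bool" where
  "A_module s \<longleftrightarrow> (\<forall>a b v w. s a (v + w) = s a v + s a w \<and> s (a + b) v = s a v + s b v
      \<and> s (a * b) v = s a (s b v) \<and> s 1 v = v)"

definition K_linear :: "('k::field \<Rightarrow> 'a::comm_ring_1) \<Rightarrow> ('a \<Rightarrow> 'v::ab_group_add \<Rightarrow> 'v)
    \<Rightarrow> ('a \<Rightarrow> 'w::ab_group_add \<Rightarrow> 'w) \<Rightarrow> ('v \<Rightarrow> 'w) \<Rightarrow> bool" where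
  "K_linear \<kappa> s s' f \<longleftrightarrow> (\<forall>v w. f (v + w) = f v + f w) \<and> (\<forall>c v. f (s (\<kappa> c) v) = s' (\<kappa> c) (f v))"

definition A_linear :: "('a::comm_ring_1 \<Rightarrow> 'v::ab_group_add \<Rightarrow> 'v)
    \<Rightarrow> ('a \<Rightarrow> 'w::ab_group_add \<Rightarrow> 'w) \<Rightarrow> ('v \<Rightarrow> 'w) \<Rightarrow> bool" where
  "A_linear s s' f \<longleftrightarrow> (\<forall>v w. f (v + w) = f v + f w) \<and> (\<forall>a v. f (s a v) = s' a (f v))"

definition lie_algebra :: "('k::field \<Rightarrow> 'a::comm_ring_1) \<Rightarrow> ('a \<Rightarrow> 'l::ab_group_add \<Rightarrow> 'l)
    \<Rightarrow> ('l \<Rightarrow> 'l \<Rightarrow> 'l) \<Rightarrow> bool" where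
  "lie_algebra \<kappa> s b \<longleftrightarrow>
     (\<forall>x y z. b (x + y) z = b x z + b y z \<and> b x (y + z) = b x y + b x z) \<and>
     (\<forall>c x y. b (s (\<kappa> c) x) y = s (\<kappa> c) (b x y) \<and> b x (s (\<kappa> c) y) = s (\<kappa> c) (b x y)) \<and>
     (\<forall>x. b x x = 0) \<and>
     (\<forall>x y z. b x (b y z) + b y (b z x) + b z (b x y) = 0)"

definition restricted_lie :: "('k::field \<Rightarrow> 'a::comm_ring_1) \<Rightarrow> ('a \<Rightarrow> 'l::ab_group_add \<Rightarrow> 'l)
    \<Rightarrow> ('l \<Rightarrow> 'l \<Rightarrow> 'l) \<Rightarrow> ('l \<Rightarrow> 'l) \<Rightarrow> bool" where
  "restricted_lie \<kappa> s b p \<longleftrightarrow> lie_algebra \<kappa> s b \<and>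
     (\<forall>c x. p (s (\<kappa> c) x) = s ((\<kappa> c)\<^sup>2) (p x)) \<and>
     (\<forall>x y. b (p x) y = b x (b x y)) \<and>
     (\<forall>x y. p (x + y) = p x + p y + b x y)"

definition derivation :: "('k::field \<Rightarrow> 'a::comm_ring_1) \<Rightarrow> ('a \<Rightarrow> 'a) \<Rightarrow> bool" where
  "derivation \<kappa> D \<longleftrightarrow> (\<forall>a b. D (a + b) = D a + D b) \<and> (\<forall>c a. D (\<kappa> c * a) = \<kappa> c * D a) \<and>
     (\<forall>a b. D (a * b) = a * D b + D a * b)"

definition restricted_LR :: "('k::field \<Rightarrow> 'a::comm_ring_1) \<Rightarrow> ('a \<Rightarrow> 'l::ab_group_add \<Rightarrow> 'l)
    \<Rightarrow> ('l \<Rightarrow> 'l \<Rightarrow> 'l) \<Rightarrow> ('l \<Rightarrow> 'l) \<Rightarrow> ('l \<Rightarrow> 'a \<Rightarrow> 'a) \<Rightarrow> bool" where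
  "restricted_LR \<kappa> s b p \<theta> \<longleftrightarrow>
     A_module s \<and> restricted_lie \<kappa> s b p \<and>
     (\<forall>x. derivation \<kappa> (\<theta> x)) \<and>
     (\<forall>x y. \<theta> (x + y) = (\<lambda>a. \<theta> x a + \<theta> y a)) \<and>
     (\<forall>a x. \<theta> (s a x) = (\<lambda>c. a * \<theta> x c)) \<and>
     (\<forall>x y. \<theta> (b x y) = (\<lambda>a. \<theta> x (\<theta> y a) - \<theta> y (\<theta> x a))) \<and>
     (\<forall>x. \<theta> (p x) = (\<lambda>a. \<theta> x (\<theta> x a))) \<and>
     (\<forall>x a y. b x (s a y) = s a (b x y) + s (\<theta> x a) y) \<and>
     (\<forall>a x. p (s a x) = s (a\<^sup>2) (p x) + s (\<theta> (s a x) a) x)"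

definition LR_morphism :: "('a::comm_ring_1 \<Rightarrow> 'l::ab_group_add \<Rightarrow> 'l) \<Rightarrow> ('l \<Rightarrow> 'l \<Rightarrow> 'l) \<Rightarrow> ('l \<Rightarrow> 'l)
    \<Rightarrow> ('l \<Rightarrow> 'a \<Rightarrow> 'a) \<Rightarrow> ('a \<Rightarrow> 'h::ab_group_add \<Rightarrow> 'h) \<Rightarrow> ('h \<Rightarrow> 'h \<Rightarrow> 'h) \<Rightarrow> ('h \<Rightarrow> 'h)
    \<Rightarrow> ('h \<Rightarrow> 'a \<Rightarrow> 'a) \<Rightarrow> ('l \<Rightarrow> 'h) \<Rightarrow> bool" where
  "LR_morphism sL bL pL \<theta>L sH bH pH \<theta>H f \<longleftrightarrow>
     A_linear sL sH f \<and> (\<forall>x y. f (bL x y) = bH (f x) (f y)) \<and> (\<forall>x. f (pL x) = pH (f x)) \<and>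
     (\<forall>x. \<theta>H (f x) = \<theta>L x)"

definition strongly_abelian :: "('m::ab_group_add \<Rightarrow> 'm \<Rightarrow> 'm) \<Rightarrow> ('m \<Rightarrow> 'm) \<Rightarrow> bool" where
  "strongly_abelian b p \<longleftrightarrow> (\<forall>m n. b m n = 0) \<and> (\<forall>m. p m = 0)"

definition abelian_extension :: "('k::field \<Rightarrow> 'a::comm_ring_1)
    \<Rightarrow> ('a \<Rightarrow> 'm::ab_group_add \<Rightarrow> 'm) \<Rightarrow> ('m \<Rightarrow> 'm \<Rightarrow> 'm) \<Rightarrow> ('m \<Rightarrow> 'm) \<Rightarrow> ('m \<Rightarrow> 'a \<Rightarrow> 'a)
    \<Rightarrow> ('a \<Rightarrow> 'e::ab_group_add \<Rightarrow> 'e) \<Rightarrow> ('e \<Rightarrow> 'e \<Rightarrow> 'e) \<Rightarrow> ('e \<Rightarrow> 'e) \<Rightarrow> ('e \<Rightarrow> 'a \<Rightarrow> 'a)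
    \<Rightarrow> ('a \<Rightarrow> 'l::ab_group_add \<Rightarrow> 'l) \<Rightarrow> ('l \<Rightarrow> 'l \<Rightarrow> 'l) \<Rightarrow> ('l \<Rightarrow> 'l) \<Rightarrow> ('l \<Rightarrow> 'a \<Rightarrow> 'a)
    \<Rightarrow> ('m \<Rightarrow> 'e) \<Rightarrow> ('e \<Rightarrow> 'l) \<Rightarrow> bool" where
  "abelian_extension \<kappa> sM bM pM \<theta>M sE bE pE \<theta>E sL bL pL \<theta>L \<iota> \<pi> \<longleftrightarrow>
     restricted_LR \<kappa> sM bM pM \<theta>M \<and> restricted_LR \<kappa> sE bE pE \<theta>E \<and> restricted_LR \<kappa> sL bL pL \<theta>L \<and>
     LR_morphism sM bM pM \<theta>M sE bE pE \<theta>E \<iota> \<and> LR_morphism sE bE pE \<theta>E sL bL pL \<theta>L \<pi> \<and>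
     inj \<iota> \<and> surj \<pi> \<and> range \<iota> = {e. \<pi> e = 0}"

text \<open>Restricted Lie-Rinehart module (M, sM, rho) over (A, L, theta_L); End(M) = K-linear
endomorphisms with commutator bracket and squaring as 2-map.\<close>
definition restricted_LR_module :: "('k::field \<Rightarrow> 'a::comm_ring_1)
    \<Rightarrow> ('a \<Rightarrow> 'l::ab_group_add \<Rightarrow> 'l) \<Rightarrow> ('l \<Rightarrow> 'l \<Rightarrow> 'l) \<Rightarrow> ('l \<Rightarrow> 'l) \<Rightarrow> ('l \<Rightarrow> 'a \<Rightarrow> 'a)
    \<Rightarrow> ('a \<Rightarrow> 'm::ab_group_add \<Rightarrow> 'm) \<Rightarrow> ('l \<Rightarrow> 'm \<Rightarrow> 'm) \<Rightarrow> bool" where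
  "restricted_LR_module \<kappa> sL bL pL \<theta>L sM \<rho> \<longleftrightarrow>
     A_module sM \<and>
     (\<forall>x. K_linear \<kappa> sM sM (\<rho> x)) \<and>
     (\<forall>x y. \<rho> (x + y) = (\<lambda>m. \<rho> x m + \<rho> y m)) \<and>
     (\<forall>c x. \<rho> (sL (\<kappa> c) x) = (\<lambda>m. sM (\<kappa> c) (\<rho> x m))) \<and>
     (\<forall>x y. \<rho> (bL x y) = (\<lambda>m. \<rho> x (\<rho> y m) - \<rho> y (\<rho> x m))) \<and>
     (\<forall>x. \<rho> (pL x) = (\<lambda>m. \<rho> x (\<rho> x m))) \<and>
     (\<forall>x a m. \<rho> x (sM a m) = sM a (\<rho> x m) + sM (\<theta>L x a) m)"

end

theory Submission
  imports Defs "HOL.Modules"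
begin

text \<open>Since \<open>\<iota> M\<close> is the kernel of \<open>\<pi>\<close>, it is an ideal of \<open>E\<close>, and since \<open>M\<close> is abelian, two
lifts of \<open>x \<in> L\<close> (which differ by an element of \<open>\<iota> M\<close>) act in the same way on \<open>\<iota> M\<close> by the
bracket. Hence \<open>\<rho>\<close> is well defined, and each axiom of a restricted Lie-Rinehart module is the
image under the injective map \<open>\<iota>\<close> of an axiom of \<open>E\<close>: bilinearity, the Jacobi identity,
\<open>[x\<^sup>[\<^sup>2\<^sup>], y] = [x, [x, y]]\<close> and the Leibniz rule for the anchor. Neither the characteristic
nor the \<open>K\<close>-algebra structure map plays any further role.\<close>

lemma lie_algebra_additive_left: "lie_algebra \<kappa> s b \<Longrightarrow> additive (\<lambda>x. b x y)"
  by (simp add: additive_def lie_algebra_def)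

lemma lie_algebra_additive_right: "lie_algebra \<kappa> s b \<Longrightarrow> additive (b x)"
  by (simp add: additive_def lie_algebra_def)

lemma lie_algebra_anticommute:
  assumes "lie_algebra \<kappa> s b"
  shows "b x y = - b y x"
proof -
  have add: "b (u + v) w = b u w + b v w" "b u (v + w) = b u v + b u w"
    and alternating: "b u u = 0" for u v w
    using assms by (simp_all add: lie_algebra_def)
  have "0 = b (x + y) (x + y)"
    by (simp add: alternating)
  also have "\<dots> = b x x + b y x + (b x y + b y y)"
    by (simp only: add)
  also have "\<dots> = b x y + b y x"
    by (simp add: alternating add.commute)
  finally show ?thesis
    by (simp add: eq_neg_iff_add_eq_0)
qed

lemma lie_algebra_bracket_bracket:
  assumes "lie_algebra \<kappa> s b"
  shows "b (b x y) z = b x (b y z) - b y (b x z)"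
proof -
  have jacobi: "b x (b y z) + b y (b z x) + b z (b x y) = 0"
    using assms by (simp add: lie_algebra_def)
  have "b (b x y) z = - b z (b x y)"
    by (rule lie_algebra_anticommute[OF assms])
  also have "\<dots> = b x (b y z) + b y (b z x)"
    using jacobi by (metis add.commute neg_eq_iff_add_eq_0)
  also have "\<dots> = b x (b y z) - b y (b x z)"
    using lie_algebra_anticommute[OF assms, of z x]
      additive.minus[OF lie_algebra_additive_right[OF assms]] by simp
  finally show ?thesis .
qed

lemma restricted_LR_lie_algebra: "restricted_LR \<kappa> s b p \<theta> \<Longrightarrow> lie_algebra \<kappa> s b"
  by (simp add: restricted_LR_def restricted_lie_def)

lemma restricted_LR_bracket_2map: "restricted_LR \<kappa> s b p \<theta> \<Longrightarrow> b (p x) y = b x (b x y)"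
  by (simp add: restricted_LR_def restricted_lie_def)

lemma restricted_LR_bracket_scalar:
  "restricted_LR \<kappa> s b p \<theta> \<Longrightarrow> b x (s a y) = s a (b x y) + s (\<theta> x a) y"
  by (simp add: restricted_LR_def)

lemma A_linear_additive: "A_linear s s' f \<Longrightarrow> additive f"
  by (simp add: A_linear_def additive_def)

lemma LR_morphism_additive: "LR_morphism sL bL pL \<theta>L sH bH pH \<theta>H f \<Longrightarrow> additive f"
  unfolding LR_morphism_def by (blast intro: A_linear_additive)

context
  fixes \<kappa> :: "'k::field \<Rightarrow> 'a::comm_ring_1"
    and sM :: "'a \<Rightarrow> 'm::ab_group_add \<Rightarrow> 'm" and bM pM \<theta>M
    and sE :: "'a \<Rightarrow> 'e::ab_group_add \<Rightarrow> 'e" and bE pE \<theta>E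
    and sL :: "'a \<Rightarrow> 'l::ab_group_add \<Rightarrow> 'l" and bL pL \<theta>L
    and \<iota> :: "'m \<Rightarrow> 'e" and \<pi> :: "'e \<Rightarrow> 'l"
  assumes ext: "abelian_extension \<kappa> sM bM pM \<theta>M sE bE pE \<theta>E sL bL pL \<theta>L \<iota> \<pi>"
    and M_abelian: "\<And>m n. bM m n = 0"
begin

lemma abelian_extension_bracket_kernel_mem: "bE e (\<iota> m) \<in> range \<iota>"
proof -
  have ker: "range \<iota> = {e. \<pi> e = 0}" and "LR_morphism sE bE pE \<theta>E sL bL pL \<theta>L \<pi>"
    and "lie_algebra \<kappa> sL bL"
    using ext by (auto simp: abelian_extension_def intro: restricted_LR_lie_algebra)
  moreover have "\<pi> (\<iota> m) = 0"
    using ker by auto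
  ultimately have "\<pi> (bE e (\<iota> m)) = bL (\<pi> e) 0"
    by (simp add: LR_morphism_def)
  also have "\<dots> = 0"
    using \<open>lie_algebra \<kappa> sL bL\<close> by (rule additive.zero[OF lie_algebra_additive_right])
  finally show ?thesis
    using ker by simp
qed

lemma abelian_extension_bracket_kernel_lift_indep:
  assumes "\<pi> e = \<pi> e'"
  shows "bE e (\<iota> m) = bE e' (\<iota> m)"
proof -
  have ker: "range \<iota> = {e. \<pi> e = 0}" and \<pi>: "LR_morphism sE bE pE \<theta>E sL bL pL \<theta>L \<pi>"
    and \<iota>: "LR_morphism sM bM pM \<theta>M sE bE pE \<theta>E \<iota>" and E: "lie_algebra \<kappa> sE bE"
    using ext by (auto simp: abelian_extension_def intro: restricted_LR_lie_algebra)
  have "\<pi> (e - e') = 0"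
    using assms additive.diff[OF LR_morphism_additive[OF \<pi>]] by simp
  then obtain n where n: "e - e' = \<iota> n"
    using ker by auto
  have "bE e (\<iota> m) - bE e' (\<iota> m) = bE (e - e') (\<iota> m)"
    using additive.diff[OF lie_algebra_additive_left[OF E]] by simp
  also have "\<dots> = \<iota> (bM n m)"
    using \<iota> n by (simp add: LR_morphism_def)
  also have "\<dots> = 0"
    using M_abelian additive.zero[OF LR_morphism_additive[OF \<iota>]] by simp
  finally show ?thesis
    by simp
qed

lemma abelian_extension_induced_action:
  "\<iota> (inv \<iota> (bE (SOME e'. \<pi> e' = \<pi> e) (\<iota> m))) = bE e (\<iota> m)"
  using abelian_extension_bracket_kernel_mem abelian_extension_bracket_kernel_lift_indep
  by (metis (mono_tags, lifting) f_inv_into_f someI)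

end

context
  fixes \<kappa> :: "'k::field \<Rightarrow> 'a::comm_ring_1"
    and sM :: "'a \<Rightarrow> 'm::ab_group_add \<Rightarrow> 'm"
    and sE :: "'a \<Rightarrow> 'e::ab_group_add \<Rightarrow> 'e" and bE pE \<theta>E
    and sL :: "'a \<Rightarrow> 'l::ab_group_add \<Rightarrow> 'l" and bL pL \<theta>L
    and \<iota> :: "'m \<Rightarrow> 'e" and \<pi> :: "'e \<Rightarrow> 'l"
    and \<rho> :: "'l \<Rightarrow> 'm \<Rightarrow> 'm"
  assumes E: "restricted_LR \<kappa> sE bE pE \<theta>E"
    and \<pi>: "LR_morphism sE bE pE \<theta>E sL bL pL \<theta>L \<pi>" and \<pi>_surj: "surj \<pi>"
    and \<iota>: "A_linear sM sE \<iota>" and \<iota>_inj: "inj \<iota>"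
    and \<rho>_lift: "\<And>e m. \<iota> (\<rho> (\<pi> e) m) = bE e (\<iota> m)"
begin

lemma lifted_action_K_linear: "K_linear \<kappa> sM sM (\<rho> x)"
proof -
  obtain e where x: "x = \<pi> e"
    using \<pi>_surj by (metis surjD)
  have "\<iota> (\<rho> x (m + n)) = \<iota> (\<rho> x m + \<rho> x n)" for m n
    using restricted_LR_lie_algebra[OF E] \<iota>
    by (simp add: x \<rho>_lift A_linear_def lie_algebra_def)
  moreover have "\<iota> (\<rho> x (sM (\<kappa> c) m)) = \<iota> (sM (\<kappa> c) (\<rho> x m))" for c m
    using restricted_LR_lie_algebra[OF E] \<iota>
    by (simp add: x \<rho>_lift A_linear_def lie_algebra_def)
  ultimately show ?thesis
    using \<iota>_inj by (simp add: K_linear_def inj_eq)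
qed

lemma lifted_action_add: "\<rho> (x + y) = (\<lambda>m. \<rho> x m + \<rho> y m)"
proof
  fix m
  obtain e e' where x: "x = \<pi> e" and y: "y = \<pi> e'"
    using \<pi>_surj by (metis surjD)
  have "\<iota> (\<rho> (x + y) m) = \<iota> (\<rho> (\<pi> (e + e')) m)"
    using additive.add[OF LR_morphism_additive[OF \<pi>]] by (simp add: x y)
  also have "\<dots> = \<iota> (\<rho> x m + \<rho> y m)"
    using restricted_LR_lie_algebra[OF E] \<iota>
    by (simp add: x y \<rho>_lift A_linear_def lie_algebra_def)
  finally show "\<rho> (x + y) m = \<rho> x m + \<rho> y m"
    using \<iota>_inj by (simp add: inj_eq)
qed

lemma lifted_action_scalar: "\<rho> (sL (\<kappa> c) x) = (\<lambda>m. sM (\<kappa> c) (\<rho> x m))"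
proof
  fix m
  obtain e where x: "x = \<pi> e"
    using \<pi>_surj by (metis surjD)
  have "\<iota> (\<rho> (sL (\<kappa> c) x) m) = \<iota> (\<rho> (\<pi> (sE (\<kappa> c) e)) m)"
    using \<pi> by (simp add: x LR_morphism_def A_linear_def)
  also have "\<dots> = \<iota> (sM (\<kappa> c) (\<rho> x m))"
    using restricted_LR_lie_algebra[OF E] \<iota>
    by (simp add: x \<rho>_lift A_linear_def lie_algebra_def)
  finally show "\<rho> (sL (\<kappa> c) x) m = sM (\<kappa> c) (\<rho> x m)"
    using \<iota>_inj by (simp add: inj_eq)
qed

lemma lifted_action_bracket: "\<rho> (bL x y) = (\<lambda>m. \<rho> x (\<rho> y m) - \<rho> y (\<rho> x m))"
proof
  fix m
  obtain e e' where x: "x = \<pi> e" and y: "y = \<pi> e'"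
    using \<pi>_surj by (metis surjD)
  have "\<iota> (\<rho> (bL x y) m) = bE (bE e e') (\<iota> m)"
    using \<pi> \<rho>_lift[of "bE e e'"] by (simp add: x y LR_morphism_def)
  also have "\<dots> = bE e (bE e' (\<iota> m)) - bE e' (bE e (\<iota> m))"
    by (rule lie_algebra_bracket_bracket[OF restricted_LR_lie_algebra[OF E]])
  also have "\<dots> = \<iota> (\<rho> x (\<rho> y m) - \<rho> y (\<rho> x m))"
    using additive.diff[OF A_linear_additive[OF \<iota>]] by (simp add: x y \<rho>_lift)
  finally show "\<rho> (bL x y) m = \<rho> x (\<rho> y m) - \<rho> y (\<rho> x m)"
    using \<iota>_inj by (simp add: inj_eq)
qed

lemma lifted_action_2map: "\<rho> (pL x) = (\<lambda>m. \<rho> x (\<rho> x m))"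
proof
  fix m
  obtain e where x: "x = \<pi> e"
    using \<pi>_surj by (metis surjD)
  have "\<iota> (\<rho> (pL x) m) = bE (pE e) (\<iota> m)"
    using \<pi> \<rho>_lift[of "pE e"] by (simp add: x LR_morphism_def)
  also have "\<dots> = \<iota> (\<rho> x (\<rho> x m))"
    by (simp add: x \<rho>_lift restricted_LR_bracket_2map[OF E])
  finally show "\<rho> (pL x) m = \<rho> x (\<rho> x m)"
    using \<iota>_inj by (simp add: inj_eq)
qed

lemma lifted_action_leibniz: "\<rho> x (sM a m) = sM a (\<rho> x m) + sM (\<theta>L x a) m"
proof -
  obtain e where x: "x = \<pi> e"
    using \<pi>_surj by (metis surjD)
  have "\<iota> (\<rho> x (sM a m)) = bE e (sE a (\<iota> m))"
    using \<iota> by (simp add: x \<rho>_lift A_linear_def)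
  also have "\<dots> = sE a (bE e (\<iota> m)) + sE (\<theta>E e a) (\<iota> m)"
    by (rule restricted_LR_bracket_scalar[OF E])
  also have "\<dots> = \<iota> (sM a (\<rho> x m) + sM (\<theta>L x a) m)"
    using \<iota> \<pi> by (simp add: x \<rho>_lift A_linear_def LR_morphism_def)
  finally show ?thesis
    using \<iota>_inj by (simp add: inj_eq)
qed

lemma restricted_LR_module_lifted_action:
  "A_module sM \<Longrightarrow> restricted_LR_module \<kappa> sL bL pL \<theta>L sM \<rho>"
  by (simp add: restricted_LR_module_def lifted_action_K_linear lifted_action_add
      lifted_action_scalar lifted_action_bracket lifted_action_2map lifted_action_leibniz)

end

theorem mainTheorem8:
  fixes \<kappa> :: "'k::field \<Rightarrow> 'a::comm_ring_1"
    and sM :: "'a \<Rightarrow> 'm::ab_group_add \<Rightarrow> 'm" and bM :: "'m \<Rightarrow> 'm \<Rightarrow> 'm" and pM :: "'m \<Rightarrow> 'm"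
    and \<theta>M :: "'m \<Rightarrow> 'a \<Rightarrow> 'a"
    and sE :: "'a \<Rightarrow> 'e::ab_group_add \<Rightarrow> 'e" and bE :: "'e \<Rightarrow> 'e \<Rightarrow> 'e" and pE :: "'e \<Rightarrow> 'e"
    and \<theta>E :: "'e \<Rightarrow> 'a \<Rightarrow> 'a"
    and sL :: "'a \<Rightarrow> 'l::ab_group_add \<Rightarrow> 'l" and bL :: "'l \<Rightarrow> 'l \<Rightarrow> 'l" and pL :: "'l \<Rightarrow> 'l"
    and \<theta>L :: "'l \<Rightarrow> 'a \<Rightarrow> 'a"
    and \<iota> :: "'m \<Rightarrow> 'e" and \<pi> :: "'e \<Rightarrow> 'l"
    and \<rho> :: "'l \<Rightarrow> 'm \<Rightarrow> 'm"
  assumes char2: "(2::'k) = 0"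
    and alg: "K_algebra \<kappa>"
    and L: "restricted_LR \<kappa> sL bL pL \<theta>L"
    and M: "restricted_LR \<kappa> sM bM pM \<theta>M"
    and Mab: "strongly_abelian bM pM"
    and ext: "abelian_extension \<kappa> sM bM pM \<theta>M sE bE pE \<theta>E sL bL pL \<theta>L \<iota> \<pi>"
    and rho_def: "\<rho> = (\<lambda>x m. inv \<iota> (bE (SOME e. \<pi> e = x) (\<iota> m)))"
  shows "(\<forall>x e m. \<pi> e = x \<longrightarrow> \<iota> (\<rho> x m) = bE e (\<iota> m))
         \<and> restricted_LR_module \<kappa> sL bL pL \<theta>L sM \<rho>"
proof -
  have E: "restricted_LR \<kappa> sE bE pE \<theta>E"
    and \<iota>: "LR_morphism sM bM pM \<theta>M sE bE pE \<theta>E \<iota>" and \<iota>_inj: "inj \<iota>"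
    and \<pi>: "LR_morphism sE bE pE \<theta>E sL bL pL \<theta>L \<pi>" and \<pi>_surj: "surj \<pi>"
    using ext by (simp_all add: abelian_extension_def)
  have lift: "\<iota> (\<rho> (\<pi> e) m) = bE e (\<iota> m)" for e m
    using Mab unfolding rho_def strongly_abelian_def
    by (blast intro: abelian_extension_induced_action[OF ext])
  have "A_module sM"
    using M by (simp add: restricted_LR_def)
  then have "restricted_LR_module \<kappa> sL bL pL \<theta>L sM \<rho>"
    using restricted_LR_module_lifted_action[OF E \<pi> \<pi>_surj _ \<iota>_inj lift] \<iota>
    by (simp add: LR_morphism_def)
  then show ?thesis
    using lift by blast
qed

end
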